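(* Let $\Theta\subset\mathbb{R}^d$ be open and bounded, $(X_{\mathcal D},\Pi_{\mathcal D},\nabla_{\mathcal D})$ a gradient discretisation with piecewise constant reconstruction as in the context, $C_{\mathcal D}>0$ a constant such that $\|\Pi_{\mathcal D}v\|\le C_{\mathcal D}\|\nabla_{\mathcal D}v\|$ for all $v\in X_{\mathcal D}$, and $\delta t>0$. Let $\varepsilon>0$, $L_\zeta>0$ and let $\zeta_\varepsilon:\mathbb{R}\to\mathbb{R}$ be Lipschitz with $\zeta_\varepsilon(0)=0$ and $\varepsilon\le\zeta_\varepsilon'\le L_\zeta$ a.e. (so $\zeta_\varepsilon$ is a bijection with inverse $\zeta_\varepsilon^{-1}$). Let $L\ge1/\varepsilon$ and let $r\in L^2(\Theta)$ be fixed (in the scheme, $r=\Pi_{\mathcal D}\zeta_\varepsilon^{-1}(v^{n-1}_\varepsilon)+f(\Pi_{\mathcal D}v_\varepsilon^{n-1})\Delta^nW$). Suppose $v_\varepsilon^n\in X_{\mathcal D}$ satisfies $$\langle\Pi_{\mathcal D}\zeta_\varepsilon^{-1}(v_\varepsilon^n),\Pi_{\mathcal D}\varphi\rangle+\delta t\langle\nabla_{\mathcal D}v^n_\varepsilon,\nabla_{\mathcal D}\varphi\rangle=\langle r,\Pi_{\mathcal D}\varphi\rangle\quad\forall\varphi\in X_{\mathcal D}.$$ Let $v_\varepsilon^{n,0}\in X_{\mathcal D}$ be arbitrary and, for $i\ge1$, let $v_\varepsilon^{n,i}\in X_{\mathcal D}$ solve $$L\langle\Pi_{\mathcal D}v_\varepsilon^{n,i},\Pi_{\mathcal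 D}\varphi\rangle+\delta t\langle\nabla_{\mathcal D}v_\varepsilon^{n,i},\nabla_{\mathcal D}\varphi\rangle=\langle L\,\Pi_{\mathcal D}v_\varepsilon^{n,i-1}-\Pi_{\mathcal D}\zeta_\varepsilon^{-1}(v_\varepsilon^{n,i-1}),\Pi_{\mathcal D}\varphi\rangle+\langle r,\Pi_{\mathcal D}\varphi\rangle\quad\forall\varphi\in X_{\mathcal D}.$$ Set $e^{n,i}:=v_\varepsilon^n-v_\varepsilon^{n,i}$ and $\|w\|_X^2:=\big(L+\tfrac{\delta t}{C_{\mathcal D}^2}\big)\|\Pi_{\mathcal D}w\|^2+\delta t\|\nabla_{\mathcal D}w\|^2$ for $w\in X_{\mathcal D}$. Then for all $i\ge1$, $$\|e^{n,i}\|_X\le\alpha\|e^{n,i-1}\|_X,\qquad \alpha:=\big(L-L_\zeta^{-1}\big)\Big[L\Big(L+\frac{\delta t}{C_{\mathcal D}^2}\Big)\Big]^{-1/2}<1,$$ and in particular $v^{n,i}_\varepsilon\to v_\varepsilon^n$ in $\|\cdot\|_X$.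
   Context: A gradient discretisation with piecewise constant reconstruction consists of: a finite-dimensional real vector space $X_{\mathcal D}$ with basis $(\mathbf e_j)_{j\in B}$ ($B$ finite); disjoint measurable subsets $(\Theta_j)_{j\in B}$ of $\Theta$ and $\Pi_{\mathcal D}v=\sum_{j\in B}v_j\mathbf 1_{\Theta_j}$ for $v=\sum_j v_j\mathbf e_j$; a linear map $\nabla_{\mathcal D}:X_{\mathcal D}\to L^2(\Theta)^d$ such that $\|\nabla_{\mathcal D}\cdot\|_{L^2}$ is a norm on $X_{\mathcal D}$. For $g:\mathbb{R}\to\mathbb{R}$ with $g(0)=0$ and $v\in X_{\mathcal D}$, $g(v):=(g(v_j))_{j\in B}$, so $\Pi_{\mathcal D}g(v)=g(\Pi_{\mathcal D}v)$. $\langle\cdot,\cdot\rangle$ and $\|\cdot\|$ denote the $L^2(\Theta)$ inner product and norm. *)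

theory Defs
  imports "HOL-Analysis.Analysis"
begin

definition L2inner :: "'a::euclidean_space set \<Rightarrow> ('a \<Rightarrow> real) \<Rightarrow> ('a \<Rightarrow> real) \<Rightarrow> real" where
  "L2inner \<Theta> f g = integral\<^sup>L (lebesgue_on \<Theta>) (\<lambda>x. f x * g x)"

definition L2norm :: "'a::euclidean_space set \<Rightarrow> ('a \<Rightarrow> real) \<Rightarrow> real" where
  "L2norm \<Theta> f = sqrt (L2inner \<Theta> f f)"

definition L2innerv :: "'a::euclidean_space set \<Rightarrow> ('a \<Rightarrow> 'a) \<Rightarrow> ('a \<Rightarrow> 'a) \<Rightarrow> real" where
  "L2innerv \<Theta> F G = integral\<^sup>L (lebesgue_on \<Theta>) (\<lambda>x. inner (F x) (G x))"

definition L2normv :: "'a::euclidean_space set \<Rightarrow> ('a \<Rightarrow> 'a) \<Rightarrow> real" where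
  "L2normv \<Theta> F = sqrt (L2innerv \<Theta> F F)"

text \<open>Piecewise constant reconstruction: X_D is 'b => real (coordinates in the basis indexed
  by the finite type 'b), Pi_D v = sum_j v_j 1_{Theta_j}.\<close>
definition PiD :: "('b::finite \<Rightarrow> 'a set) \<Rightarrow> ('b \<Rightarrow> real) \<Rightarrow> 'a \<Rightarrow> real" where
  "PiD \<Theta>s v = (\<lambda>x. \<Sum>j\<in>UNIV. v j * indicator (\<Theta>s j) x)"

definition pc_grad_disc :: "'a::euclidean_space set \<Rightarrow> ('b::finite \<Rightarrow> 'a set)
    \<Rightarrow> (('b \<Rightarrow> real) \<Rightarrow> 'a \<Rightarrow> 'a) \<Rightarrow> bool" where
  "pc_grad_disc \<Theta> \<Theta>s grad \<longleftrightarrow>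
     (\<forall>j. \<Theta>s j \<in> sets lebesgue \<and> \<Theta>s j \<subseteq> \<Theta>) \<and> disjoint_family \<Theta>s \<and>
     (\<forall>v. grad v \<in> borel_measurable (lebesgue_on \<Theta>) \<and>
          integrable (lebesgue_on \<Theta>) (\<lambda>x. (norm (grad v x))\<^sup>2)) \<and>
     (\<forall>a v w. AE x in lebesgue_on \<Theta>. grad (\<lambda>j. a * v j + w j) x = a *\<^sub>R grad v x + grad w x) \<and>
     (\<forall>v. L2normv \<Theta> (grad v) = 0 \<longrightarrow> (\<forall>j. v j = 0))"

definition normX :: "'a::euclidean_space set \<Rightarrow> ('b::finite \<Rightarrow> 'a set) \<Rightarrow> (('b \<Rightarrow> real) \<Rightarrow> 'a \<Rightarrow> 'a)
    \<Rightarrow> real \<Rightarrow> real \<Rightarrow> real \<Rightarrow> ('b \<Rightarrow> real) \<Rightarrow> real" where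
  "normX \<Theta> \<Theta>s grad L dt CD w =
     sqrt ((L + dt / CD\<^sup>2) * (L2norm \<Theta> (PiD \<Theta>s w))\<^sup>2 + dt * (L2normv \<Theta> (grad w))\<^sup>2)"

end

theory Submission
  imports Defs
begin

text \<open>The error e = v - v^i of the relaxation step satisfies
  L<Pi e, Pi phi> + dt<grad e, grad phi> = <Pi (T v - T v^(i-1)), Pi phi> for the coordinatewise
  map T = L id - zeta^-1. As epsilon <= zeta' <= L_zeta, the slopes of zeta^-1 lie in
  [1/L_zeta, 1/epsilon], so T is (L - 1/L_zeta)-Lipschitz. Testing with phi = e and applying
  Cauchy-Schwarz gives L||Pi e||^2 + dt||grad e||^2 <= (L - 1/L_zeta) ||Pi e'|| ||Pi e|| for
  e' = v - v^(i-1), and the discrete Poincare inequality turns this into ||e||_X <= alpha ||e'||_X.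
  The slope bounds on zeta follow from the a.e. bounds on zeta' because a Lipschitz function maps
  null sets to null sets.\<close>

lemma negligible_Lipschitz_image:
  fixes f :: "'a::euclidean_space \<Rightarrow> 'a"
  assumes "C-lipschitz_on UNIV f" and "negligible S"
  shows "negligible (f ` S)"
proof (rule negligible_locally_Lipschitz_image[OF order_refl \<open>negligible S\<close>])
  fix x
  show "\<exists>T B. open T \<and> x \<in> T \<and> (\<forall>y\<in>S \<inter> T. norm (f y - f x) \<le> B * norm (y - x))"
    using assms(1) by (intro exI[of _ UNIV] exI[of _ C]) (auto simp: lipschitz_on_def dist_norm)
qed

lemma last_level_crossing:
  fixes k :: "real \<Rightarrow> real"
  assumes cont: "continuous_on {a..b} k" and "a \<le> b" and "k b < y" and "y \<le> k a"
  obtains x where "a \<le> x" "x < b" "k x = y" "\<And>t. x < t \<Longrightarrow> t \<le> b \<Longrightarrow> k t < y"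
proof -
  define S where "S = {t \<in> {a..b}. y \<le> k t}"
  have "S = {a..b} \<inter> k -` {y..}" by (auto simp: S_def)
  then have "compact S"
    using continuous_closed_preimage[OF cont closed_atLeastAtMost closed_atLeast]
    by (simp add: compact_eq_bounded_closed bounded_Int)
  moreover have "a \<in> S"
    using assms unfolding S_def by auto
  ultimately obtain x where "x \<in> S" and x_max: "\<And>t. t \<in> S \<Longrightarrow> t \<le> x"
    using compact_attains_sup by (metis empty_iff)
  then have x: "a \<le> x" "x \<le> b" "y \<le> k x" by (auto simp: S_def)
  have below: "k t < y" if "x < t" "t \<le> b" for t
    using x_max[of t] that x by (force simp: S_def)
  have "x < b" using x \<open>k b < y\<close> by (cases "x = b") auto
  moreover have "k x = y"
  proof (rule ccontr)
    assume "k x \<noteq> y"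
    obtain t where "x \<le> t" "t \<le> b" "k t = y"
      using IVT2'[of k b y x] x \<open>x < b\<close> \<open>k b < y\<close> continuous_on_subset[OF cont] by fastforce
    with below[of t] \<open>k x \<noteq> y\<close> show False by (cases "t = x") auto
  qed
  ultimately show thesis using that x below by blast
qed

text \<open>If k b < k a, some level between them is attained only outside the null set k ` N; at its last
  crossing in [a, b] the derivative of k is positive, which is impossible.\<close>

lemma Lipschitz_pos_deriv_imp_mono:
  fixes k :: "real \<Rightarrow> real"
  assumes lip: "C-lipschitz_on UNIV k" and "negligible N"
    and deriv_pos: "\<And>x. x \<notin> N \<Longrightarrow> \<exists>D>0. (k has_real_derivative D) (at x)"
    and "a \<le> b"
  shows "k a \<le> k b"
proof (rule ccontr)
  assume "\<not> k a \<le> k b"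
  have "negligible (k ` N)"
    using negligible_Lipschitz_image[OF lip \<open>negligible N\<close>] .
  moreover have "\<not> negligible {k b<..<k a}"
    using \<open>\<not> k a \<le> k b\<close> negligible_interval(2)[of "k b" "k a"] by (simp add: box_real)
  ultimately have "\<not> {k b<..<k a} \<subseteq> k ` N" using negligible_subset by blast
  then obtain y where y: "k b < y" "y < k a" "y \<notin> k ` N" by (meson greaterThanLessThan_iff subsetI)
  have "continuous_on {a..b} k"
    using lipschitz_on_continuous_on[OF lip] continuous_on_subset by blast
  then obtain x where x: "x < b" "k x = y" and below: "\<And>t. x < t \<Longrightarrow> t \<le> b \<Longrightarrow> k t < y"
    using last_level_crossing[OF _ \<open>a \<le> b\<close> y(1) less_imp_le[OF y(2)]] by blast
  have "x \<notin> N" using x y by auto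
  then obtain D where "D > 0" "(k has_real_derivative D) (at x)" using deriv_pos by blast
  then obtain d where "d > 0" and up: "\<And>h. 0 < h \<Longrightarrow> h < d \<Longrightarrow> k x < k (x + h)"
    using DERIV_pos_inc_right by blast
  define h where "h = min (d / 2) (b - x)"
  have "0 < h" "h < d" "x + h \<le> b" using \<open>d > 0\<close> \<open>x < b\<close> by (auto simp: h_def)
  then show False using up[of h] below[of "x + h"] x by auto
qed

lemma Lipschitz_AE_deriv_ge_imp_slope_ge:
  fixes f :: "real \<Rightarrow> real"
  assumes lip: "C-lipschitz_on UNIV f"
    and ae: "AE x in lborel. f differentiable (at x) \<and> c \<le> deriv f x"
    and "a \<le> b"
  shows "c * (b - a) \<le> f b - f a"
proof -
  obtain N where "negligible N" and good: "\<And>x. x \<notin> N \<Longrightarrow> f differentiable (at x) \<and> c \<le> deriv f x"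
    using AE_completion[OF ae] unfolding eventually_ae_filter_negligible by blast
  have perturbed: "(c - \<delta>) * (b - a) \<le> f b - f a" if "\<delta> > 0" for \<delta>
  proof -
    have "(\<lambda>x. f x - (c - \<delta>) * x) a \<le> (\<lambda>x. f x - (c - \<delta>) * x) b"
    proof (rule Lipschitz_pos_deriv_imp_mono[OF _ \<open>negligible N\<close> _ \<open>a \<le> b\<close>])
      show "(C + \<bar>c - \<delta>\<bar> * 1)-lipschitz_on UNIV (\<lambda>x. f x - (c - \<delta>) * x)"
        by (intro lipschitz_intros lip)
      fix x assume "x \<notin> N"
      then have "(f has_real_derivative deriv f x) (at x)" "c \<le> deriv f x"
        using good DERIV_deriv_iff_real_differentiable by blast+
      then show "\<exists>D>0. ((\<lambda>x. f x - (c - \<delta>) * x) has_real_derivative D) (at x)"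
        using that by (intro exI[of _ "deriv f x - (c - \<delta>)"]) (auto intro!: derivative_eq_intros)
    qed
    then show ?thesis by (simp add: algebra_simps)
  qed
  show ?thesis
  proof (cases "a = b")
    case False
    with \<open>a \<le> b\<close> have "b - a > 0" by simp
    show ?thesis
    proof (rule field_le_epsilon)
      fix e :: real assume "e > 0"
      have "(c - e / (b - a)) * (b - a) = c * (b - a) - e"
        using \<open>b - a > 0\<close> by (simp add: field_simps)
      with perturbed[of "e / (b - a)"] \<open>e > 0\<close> \<open>b - a > 0\<close> show "c * (b - a) \<le> f b - f a + e"
        by simp
    qed
  qed simp
qed

lemma Lipschitz_AE_deriv_le_imp_slope_le:
  fixes f :: "real \<Rightarrow> real"
  assumes lip: "C-lipschitz_on UNIV f"
    and ae: "AE x in lborel. f differentiable (at x) \<and> deriv f x \<le> c"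
    and "a \<le> b"
  shows "f b - f a \<le> c * (b - a)"
proof -
  have lip': "C-lipschitz_on UNIV (\<lambda>x. - f x)" using lip by simp
  have "AE x in lborel. (\<lambda>x. - f x) differentiable (at x) \<and> - c \<le> deriv (\<lambda>x. - f x) x"
    using ae
  proof eventually_elim
    case (elim x)
    then have "((\<lambda>x. - f x) has_real_derivative - deriv f x) (at x)"
      by (intro DERIV_minus) (simp add: DERIV_deriv_iff_real_differentiable)
    with elim show ?case by (auto simp: DERIV_imp_deriv real_differentiable_def)
  qed
  from Lipschitz_AE_deriv_ge_imp_slope_ge[OF lip' this \<open>a \<le> b\<close>] show ?thesis by simp
qed

lemma bij_if_slope_bounds:
  fixes \<zeta> :: "real \<Rightarrow> real"
  assumes "\<epsilon> > 0"
    and slope: "\<And>x y. x \<le> y \<Longrightarrow> \<epsilon> * (y - x) \<le> \<zeta> y - \<zeta> x \<and> \<zeta> y - \<zeta> x \<le> L\<zeta> * (y - x)"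
  shows "bij \<zeta>"
proof (rule bijI)
  have increment: "\<bar>\<zeta> y - \<zeta> x\<bar> \<le> L\<zeta> * \<bar>y - x\<bar>" for x y
  proof (cases "x \<le> y")
    case True
    moreover have "0 \<le> \<epsilon> * (y - x)" using True \<open>\<epsilon> > 0\<close> by simp
    ultimately show ?thesis using slope[OF True] by simp
  next
    case False
    moreover have "0 \<le> \<epsilon> * (x - y)" using False \<open>\<epsilon> > 0\<close> by simp
    ultimately show ?thesis using slope[of y x] by (simp add: abs_minus_commute)
  qed
  moreover have "0 \<le> L\<zeta>" using slope[of 0 1] \<open>\<epsilon> > 0\<close> by simp
  ultimately have "L\<zeta>-lipschitz_on UNIV \<zeta>"
    by (intro lipschitz_onI) (auto simp: dist_real_def)
  then have cont: "continuous_on UNIV \<zeta>" by (rule lipschitz_on_continuous_on)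
  have "strict_mono \<zeta>"
  proof (rule strict_monoI)
    fix x y :: real assume "x < y"
    then show "\<zeta> x < \<zeta> y" using slope[of x y] mult_pos_pos[OF \<open>\<epsilon> > 0\<close>, of "y - x"] by simp
  qed
  then show "inj \<zeta>" by (rule strict_mono_imp_inj_on)
  show "surj \<zeta>"
  proof (rule surjI)
    fix c
    define r where "r = \<bar>c - \<zeta> 0\<bar> / \<epsilon>"
    have "r \<ge> 0" "\<epsilon> * r = \<bar>c - \<zeta> 0\<bar>" using \<open>\<epsilon> > 0\<close> by (auto simp: r_def)
    then have "\<zeta> (- r) \<le> c" "c \<le> \<zeta> r" using slope[of "- r" 0] slope[of 0 r] by auto
    then obtain x where "\<zeta> x = c"
      using IVT'[of \<zeta> "- r" c r] continuous_on_subset[OF cont] \<open>r \<ge> 0\<close> by auto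
    then show "\<zeta> (inv \<zeta> c) = c" by (metis f_inv_into_f rangeI)
  qed
qed

lemma Lipschitz_relaxed_inverse:
  fixes \<zeta> :: "real \<Rightarrow> real"
  assumes "\<epsilon> > 0" and "1 / \<epsilon> \<le> L"
    and slope: "\<And>x y. x \<le> y \<Longrightarrow> \<epsilon> * (y - x) \<le> \<zeta> y - \<zeta> x \<and> \<zeta> y - \<zeta> x \<le> L\<zeta> * (y - x)"
  shows "(L - 1 / L\<zeta>)-lipschitz_on UNIV (\<lambda>p. L * p - inv \<zeta> p)"
proof (rule lipschitz_onI)
  have "\<epsilon> \<le> L\<zeta>" using slope[of 0 1] by simp
  then show "0 \<le> L - 1 / L\<zeta>"
    using \<open>\<epsilon> > 0\<close> \<open>1 / \<epsilon> \<le> L\<close> frac_le[of 1 1 \<epsilon> L\<zeta>] by linarith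
  have ordered: "\<bar>L * (\<zeta> y - \<zeta> x) - (y - x)\<bar> \<le> (L - 1 / L\<zeta>) * \<bar>\<zeta> y - \<zeta> x\<bar>" if "x \<le> y" for x y
  proof -
    define d where "d = \<zeta> y - \<zeta> x"
    have d_bounds: "\<epsilon> * (y - x) \<le> d" "d \<le> L\<zeta> * (y - x)" using slope[OF that] by (auto simp: d_def)
    moreover have "0 \<le> \<epsilon> * (y - x)" using that \<open>\<epsilon> > 0\<close> by simp
    ultimately have "d \<ge> 0" by linarith
    have "y - x \<le> d / \<epsilon>" "d / L\<zeta> \<le> y - x"
      using d_bounds \<open>\<epsilon> > 0\<close> \<open>\<epsilon> \<le> L\<zeta>\<close> by (auto simp: field_simps)
    moreover have "d / \<epsilon> \<le> L * d"
      using \<open>d \<ge> 0\<close> \<open>1 / \<epsilon> \<le> L\<close> mult_right_mono[of "1 / \<epsilon>" L d] by simp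
    ultimately show ?thesis
      using \<open>d \<ge> 0\<close> unfolding d_def[symmetric] by (simp add: algebra_simps)
  qed
  fix p q :: real
  have "bij \<zeta>" using \<open>\<epsilon> > 0\<close> slope by (rule bij_if_slope_bounds)
  then obtain x y where "p = \<zeta> x" "q = \<zeta> y" "inv \<zeta> (\<zeta> x) = x" "inv \<zeta> (\<zeta> y) = y"
    by (metis bij_pointE bij_is_inj inv_f_f)
  then show "dist (L * p - inv \<zeta> p) (L * q - inv \<zeta> q) \<le> (L - 1 / L\<zeta>) * dist p q"
    using ordered[of x y] ordered[of y x]
    by (cases "x \<le> y") (auto simp: dist_real_def algebra_simps abs_minus_commute)
qed

lemma PiD_eq_on_cell:
  assumes "disjoint_family \<Theta>s" and "x \<in> \<Theta>s j"
  shows "PiD \<Theta>s u x = u j"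
proof -
  have "PiD \<Theta>s u x = (\<Sum>i\<in>UNIV. if i = j then u i else 0)"
    unfolding PiD_def using assms by (intro sum.cong) (auto simp: disjoint_family_on_def indicator_def)
  then show ?thesis by simp
qed

lemma PiD_mult:
  assumes "disjoint_family \<Theta>s"
  shows "PiD \<Theta>s u x * PiD \<Theta>s w x = PiD \<Theta>s (\<lambda>j. u j * w j) x"
proof (cases "\<exists>j. x \<in> \<Theta>s j")
  case True
  then obtain j where "x \<in> \<Theta>s j" by blast
  then show ?thesis by (simp add: PiD_eq_on_cell[OF assms])
qed (simp add: PiD_def)

lemma PiD_linear: "PiD \<Theta>s (\<lambda>j. a * u j - w j) x = a * PiD \<Theta>s u x - PiD \<Theta>s w x"
  unfolding PiD_def sum_distrib_left sum_subtractf[symmetric] by (rule sum.cong) (simp_all add: algebra_simps)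

lemma integral_PiD:
  assumes "\<And>j. \<Theta>s j \<in> sets lebesgue" and "\<And>j. \<Theta>s j \<subseteq> \<Theta>" and "\<Theta> \<in> lmeasurable"
  shows "(\<integral>x. PiD \<Theta>s c x \<partial>lebesgue_on \<Theta>) = (\<Sum>j\<in>UNIV. c j * measure (lebesgue_on \<Theta>) (\<Theta>s j))"
proof -
  interpret finite_measure "lebesgue_on \<Theta>"
    using \<open>\<Theta> \<in> lmeasurable\<close> by (rule finite_measure_lebesgue_on)
  have "\<Theta>s j \<in> sets (lebesgue_on \<Theta>)" for j
    using assms by (simp add: sets_restrict_space_iff fmeasurable_def)
  then have "integrable (lebesgue_on \<Theta>) (\<lambda>x. c j * indicator (\<Theta>s j) x)" for j
    by (simp add: less_top[symmetric])
  then have "(\<integral>x. PiD \<Theta>s c x \<partial>lebesgue_on \<Theta>) = (\<Sum>j\<in>UNIV. \<integral>x. c j * indicator (\<Theta>s j) x \<partial>lebesgue_on \<Theta>)"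
    unfolding PiD_def by (rule Bochner_Integration.integral_sum)
  also have "\<dots> = (\<Sum>j\<in>UNIV. c j * measure (lebesgue_on \<Theta>) (\<Theta>s j))"
    using assms(2) by (simp add: Int_absorb2)
  finally show ?thesis .
qed

lemma L2inner_PiD:
  assumes "disjoint_family \<Theta>s" and "\<And>j. \<Theta>s j \<in> sets lebesgue" and "\<And>j. \<Theta>s j \<subseteq> \<Theta>"
    and "\<Theta> \<in> lmeasurable"
  shows "L2inner \<Theta> (PiD \<Theta>s u) (PiD \<Theta>s w) = (\<Sum>j\<in>UNIV. u j * w j * measure (lebesgue_on \<Theta>) (\<Theta>s j))"
  unfolding L2inner_def PiD_mult[OF assms(1)] integral_PiD[OF assms(2-4)] ..

lemma integrable_inner_grad:
  assumes "pc_grad_disc \<Theta> \<Theta>s grad"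
  shows "integrable (lebesgue_on \<Theta>) (\<lambda>x. inner (grad u x) (grad w x))"
proof (rule Bochner_Integration.integrable_bound)
  show "integrable (lebesgue_on \<Theta>) (\<lambda>x. (norm (grad u x))\<^sup>2 + (norm (grad w x))\<^sup>2)"
    using assms unfolding pc_grad_disc_def by (intro Bochner_Integration.integrable_add) auto
  show "(\<lambda>x. inner (grad u x) (grad w x)) \<in> borel_measurable (lebesgue_on \<Theta>)"
    using assms unfolding pc_grad_disc_def by (intro borel_measurable_inner) auto
  show "AE x in lebesgue_on \<Theta>. norm (inner (grad u x) (grad w x))
          \<le> norm ((norm (grad u x))\<^sup>2 + (norm (grad w x))\<^sup>2)"
  proof (rule AE_I2)
    fix x
    have "\<bar>inner (grad u x) (grad w x)\<bar> \<le> norm (grad u x) * norm (grad w x)"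
      by (rule Cauchy_Schwarz_ineq2)
    also have "\<dots> \<le> (norm (grad u x))\<^sup>2 + (norm (grad w x))\<^sup>2"
      using sum_squares_bound[of "norm (grad u x)" "norm (grad w x)"]
        mult_nonneg_nonneg[OF norm_ge_zero norm_ge_zero, of "grad u x" "grad w x"] by linarith
    finally show "norm (inner (grad u x) (grad w x)) \<le> norm ((norm (grad u x))\<^sup>2 + (norm (grad w x))\<^sup>2)"
      by simp
  qed
qed

lemma L2innerv_grad_diff:
  assumes gd: "pc_grad_disc \<Theta> \<Theta>s grad"
  shows "L2innerv \<Theta> (grad (\<lambda>j. p j - q j)) (grad w)
       = L2innerv \<Theta> (grad p) (grad w) - L2innerv \<Theta> (grad q) (grad w)"
proof -
  have "AE x in lebesgue_on \<Theta>. grad (\<lambda>j. (- 1) * q j + p j) x = (- 1) *\<^sub>R grad q x + grad p x"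
    using gd unfolding pc_grad_disc_def by blast
  then have "AE x in lebesgue_on \<Theta>.
      inner (grad (\<lambda>j. p j - q j) x) (grad w x) = inner (grad p x) (grad w x) - inner (grad q x) (grad w x)"
    by eventually_elim (simp add: inner_diff_left)
  moreover have "grad u \<in> borel_measurable (lebesgue_on \<Theta>)" for u
    using gd unfolding pc_grad_disc_def by blast
  ultimately have "L2innerv \<Theta> (grad (\<lambda>j. p j - q j)) (grad w)
      = (\<integral>x. inner (grad p x) (grad w x) - inner (grad q x) (grad w x) \<partial>lebesgue_on \<Theta>)"
    unfolding L2innerv_def by (intro integral_cong_AE) auto
  also have "\<dots> = L2innerv \<Theta> (grad p) (grad w) - L2innerv \<Theta> (grad q) (grad w)"
    unfolding L2innerv_def by (intro Bochner_Integration.integral_diff integrable_inner_grad[OF gd])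
  finally show ?thesis .
qed

lemma L2norm_sq: "(L2norm \<Theta> f)\<^sup>2 = L2inner \<Theta> f f"
proof -
  have "0 \<le> L2inner \<Theta> f f"
    unfolding L2inner_def by (rule Bochner_Integration.integral_nonneg) simp
  then show ?thesis by (simp add: L2norm_def)
qed

lemma L2norm_nonneg: "0 \<le> L2norm \<Theta> f"
  using L2norm_sq[of \<Theta> f] by (simp add: L2norm_def)

lemma L2normv_sq: "(L2normv \<Theta> F)\<^sup>2 = L2innerv \<Theta> F F"
proof -
  have "0 \<le> L2innerv \<Theta> F F"
    unfolding L2innerv_def by (rule Bochner_Integration.integral_nonneg) simp
  then show ?thesis by (simp add: L2normv_def)
qed

lemma weighted_Cauchy_Schwarz_dominated:
  fixes g u w m :: "'b \<Rightarrow> real"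
  assumes "\<And>j. 0 \<le> m j" and "0 \<le> M" and "\<And>j. \<bar>g j\<bar> \<le> M * \<bar>u j\<bar>"
  shows "(\<Sum>j\<in>A. g j * w j * m j) \<le> M * sqrt (\<Sum>j\<in>A. u j * u j * m j) * sqrt (\<Sum>j\<in>A. w j * w j * m j)"
proof -
  have sq: "(c * sqrt (m j))\<^sup>2 = c * c * m j" for c j
    using assms(1)[of j] by (simp add: power_mult_distrib power2_eq_square)
  have "(\<Sum>j\<in>A. g j * w j * m j) \<le> (\<Sum>j\<in>A. M * (\<bar>u j * sqrt (m j)\<bar> * \<bar>w j * sqrt (m j)\<bar>))"
  proof (rule sum_mono)
    fix j
    have "g j * w j * m j \<le> \<bar>g j\<bar> * \<bar>w j\<bar> * m j"
      using assms(1)[of j] by (intro mult_right_mono) (auto simp: abs_mult[symmetric])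
    also have "\<dots> \<le> M * \<bar>u j\<bar> * \<bar>w j\<bar> * m j"
      using assms(1,3)[of j] by (intro mult_right_mono) auto
    finally show "g j * w j * m j \<le> M * (\<bar>u j * sqrt (m j)\<bar> * \<bar>w j * sqrt (m j)\<bar>)"
      using assms(1)[of j] by (simp add: abs_mult algebra_simps)
  qed
  also have "\<dots> \<le> M * (L2_set (\<lambda>j. u j * sqrt (m j)) A * L2_set (\<lambda>j. w j * sqrt (m j)) A)"
    unfolding sum_distrib_left[symmetric] using assms(2) by (intro mult_left_mono L2_set_mult_ineq)
  finally show ?thesis by (simp add: L2_set_def sq mult.assoc)
qed

lemma contraction_from_energy_estimate:
  fixes L s dt M a a' b b' :: real
  assumes "0 < L" "0 \<le> s" "0 \<le> dt" "0 \<le> M" "0 \<le> a" "0 \<le> a'"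
    and poinc: "s * a\<^sup>2 \<le> dt * b\<^sup>2"
    and energy: "L * a\<^sup>2 + dt * b\<^sup>2 \<le> M * a' * a"
  shows "sqrt ((L + s) * a\<^sup>2 + dt * b\<^sup>2) \<le> M / sqrt (L * (L + s)) * sqrt ((L + s) * a'\<^sup>2 + dt * b'\<^sup>2)"
proof -
  define t where "t = M * a'"
  have "0 \<le> t" using assms by (simp add: t_def)
  have "(L + s) * a * a \<le> t * a"
    using poinc energy by (simp add: t_def power2_eq_square algebra_simps)
  then have "(L + s) * a \<le> t"
    using \<open>0 \<le> t\<close> \<open>0 \<le> a\<close> by (cases "a = 0") (auto intro: mult_right_le_imp_le)
  have "L * (t * a + s * a\<^sup>2) \<le> t\<^sup>2"
  proof -
    define d where "d = t - (L + s) * a"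
    have "t\<^sup>2 - L * (t * a + s * a\<^sup>2) = s\<^sup>2 * a\<^sup>2 + (L + 2 * s) * a * d + d\<^sup>2"
      by (simp add: d_def power2_eq_square algebra_simps)
    moreover have "0 \<le> s\<^sup>2 * a\<^sup>2 + (L + 2 * s) * a * d + d\<^sup>2"
      using assms \<open>(L + s) * a \<le> t\<close> by (simp add: d_def)
    ultimately show ?thesis by linarith
  qed
  have "(L + s) * a\<^sup>2 + dt * b\<^sup>2 \<le> t * a + s * a\<^sup>2"
    using energy by (simp add: t_def algebra_simps)
  also have "\<dots> \<le> t\<^sup>2 / L"
    using \<open>L * (t * a + s * a\<^sup>2) \<le> t\<^sup>2\<close> \<open>0 < L\<close> by (simp add: field_simps)
  also have "\<dots> = (M / sqrt (L * (L + s)))\<^sup>2 * ((L + s) * a'\<^sup>2)"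
    using assms by (simp add: t_def power_mult_distrib power_divide)
  also have "\<dots> \<le> (M / sqrt (L * (L + s)))\<^sup>2 * ((L + s) * a'\<^sup>2 + dt * b'\<^sup>2)"
    using assms by (intro mult_left_mono) auto
  finally have "sqrt ((L + s) * a\<^sup>2 + dt * b\<^sup>2)
      \<le> sqrt ((M / sqrt (L * (L + s)))\<^sup>2 * ((L + s) * a'\<^sup>2 + dt * b'\<^sup>2))"
    by (rule real_sqrt_le_mono)
  also have "\<dots> = M / sqrt (L * (L + s)) * sqrt ((L + s) * a'\<^sup>2 + dt * b'\<^sup>2)"
    using assms by (simp add: real_sqrt_mult)
  finally show ?thesis .
qed

lemma normX_nonneg:
  assumes "0 \<le> L" and "0 \<le> dt"
  shows "0 \<le> normX \<Theta> \<Theta>s grad L dt CD w"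
  unfolding normX_def using assms by simp

lemma relaxation_error_identity:
  fixes \<Theta> :: "'a::euclidean_space set" and \<Theta>s :: "'b::finite \<Rightarrow> 'a set"
    and grad :: "('b \<Rightarrow> real) \<Rightarrow> 'a \<Rightarrow> 'a" and \<xi> :: "real \<Rightarrow> real"
    and R :: "('b \<Rightarrow> real) \<Rightarrow> real" and v u u' :: "'b \<Rightarrow> real"
  assumes gd: "pc_grad_disc \<Theta> \<Theta>s grad" and "\<Theta> \<in> lmeasurable"
    and eqv: "\<And>\<phi>. L2inner \<Theta> (PiD \<Theta>s (\<lambda>j. \<xi> (v j))) (PiD \<Theta>s \<phi>)
                 + dt * L2innerv \<Theta> (grad v) (grad \<phi>) = R \<phi>"
    and equ: "\<And>\<phi>. L * L2inner \<Theta> (PiD \<Theta>s u) (PiD \<Theta>s \<phi>) + dt * L2innerv \<Theta> (grad u) (grad \<phi>)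
        = L2inner \<Theta> (\<lambda>x. L * PiD \<Theta>s u' x - PiD \<Theta>s (\<lambda>j. \<xi> (u' j)) x) (PiD \<Theta>s \<phi>) + R \<phi>"
  shows "L * (L2norm \<Theta> (PiD \<Theta>s (\<lambda>j. v j - u j)))\<^sup>2 + dt * (L2normv \<Theta> (grad (\<lambda>j. v j - u j)))\<^sup>2
    = L2inner \<Theta> (PiD \<Theta>s (\<lambda>j. (L * v j - \<xi> (v j)) - (L * u' j - \<xi> (u' j)))) (PiD \<Theta>s (\<lambda>j. v j - u j))"
proof -
  define e where "e j = v j - u j" for j
  define m where "m j = measure (lebesgue_on \<Theta>) (\<Theta>s j)" for j
  from gd have "disjoint_family \<Theta>s" "\<And>j. \<Theta>s j \<in> sets lebesgue" "\<And>j. \<Theta>s j \<subseteq> \<Theta>"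
    unfolding pc_grad_disc_def by auto
  note IP = L2inner_PiD[OF this \<open>\<Theta> \<in> lmeasurable\<close>, folded m_def]
  have "L2innerv \<Theta> (grad e) (grad e) = L2innerv \<Theta> (grad v) (grad e) - L2innerv \<Theta> (grad u) (grad e)"
    unfolding e_def by (rule L2innerv_grad_diff[OF gd])
  then have "dt * L2innerv \<Theta> (grad e) (grad e)
      = dt * L2innerv \<Theta> (grad v) (grad e) - dt * L2innerv \<Theta> (grad u) (grad e)"
    by (simp add: right_diff_distrib)
  moreover have "(\<Sum>j\<in>UNIV. ((L * v j - \<xi> (v j)) - (L * u' j - \<xi> (u' j))) * e j * m j)
      = L * (\<Sum>j\<in>UNIV. e j * e j * m j) + L * (\<Sum>j\<in>UNIV. u j * e j * m j)
        - (\<Sum>j\<in>UNIV. (L * u' j - \<xi> (u' j)) * e j * m j) - (\<Sum>j\<in>UNIV. \<xi> (v j) * e j * m j)"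
    unfolding sum_distrib_left sum.distrib[symmetric] sum_subtractf[symmetric]
    by (rule sum.cong) (simp_all add: e_def algebra_simps)
  ultimately show ?thesis
    using eqv[of e] equ[of e] unfolding e_def[symmetric] L2norm_sq L2normv_sq PiD_linear[symmetric] IP
    by linarith
qed

lemma relaxation_energy_estimate:
  fixes \<Theta> :: "'a::euclidean_space set" and \<Theta>s :: "'b::finite \<Rightarrow> 'a set"
    and grad :: "('b \<Rightarrow> real) \<Rightarrow> 'a \<Rightarrow> 'a" and \<xi> :: "real \<Rightarrow> real"
    and R :: "('b \<Rightarrow> real) \<Rightarrow> real" and v u u' :: "'b \<Rightarrow> real"
  assumes gd: "pc_grad_disc \<Theta> \<Theta>s grad" and "\<Theta> \<in> lmeasurable"
    and lip: "M-lipschitz_on UNIV (\<lambda>p. L * p - \<xi> p)"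
    and eqv: "\<And>\<phi>. L2inner \<Theta> (PiD \<Theta>s (\<lambda>j. \<xi> (v j))) (PiD \<Theta>s \<phi>)
                 + dt * L2innerv \<Theta> (grad v) (grad \<phi>) = R \<phi>"
    and equ: "\<And>\<phi>. L * L2inner \<Theta> (PiD \<Theta>s u) (PiD \<Theta>s \<phi>) + dt * L2innerv \<Theta> (grad u) (grad \<phi>)
        = L2inner \<Theta> (\<lambda>x. L * PiD \<Theta>s u' x - PiD \<Theta>s (\<lambda>j. \<xi> (u' j)) x) (PiD \<Theta>s \<phi>) + R \<phi>"
  shows "L * (L2norm \<Theta> (PiD \<Theta>s (\<lambda>j. v j - u j)))\<^sup>2 + dt * (L2normv \<Theta> (grad (\<lambda>j. v j - u j)))\<^sup>2
    \<le> M * L2norm \<Theta> (PiD \<Theta>s (\<lambda>j. v j - u' j)) * L2norm \<Theta> (PiD \<Theta>s (\<lambda>j. v j - u j))"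
proof -
  define m where "m j = measure (lebesgue_on \<Theta>) (\<Theta>s j)" for j
  from gd have "disjoint_family \<Theta>s" "\<And>j. \<Theta>s j \<in> sets lebesgue" "\<And>j. \<Theta>s j \<subseteq> \<Theta>"
    unfolding pc_grad_disc_def by auto
  note IP = L2inner_PiD[OF this \<open>\<Theta> \<in> lmeasurable\<close>, folded m_def]
  have "(\<Sum>j\<in>UNIV. ((L * v j - \<xi> (v j)) - (L * u' j - \<xi> (u' j))) * (v j - u j) * m j)
      \<le> M * sqrt (\<Sum>j\<in>UNIV. (v j - u' j) * (v j - u' j) * m j)
            * sqrt (\<Sum>j\<in>UNIV. (v j - u j) * (v j - u j) * m j)"
  proof (rule weighted_Cauchy_Schwarz_dominated)
    show "0 \<le> m j" for j by (simp add: m_def)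
    show "0 \<le> M" using lip by (rule lipschitz_on_nonneg)
    show "\<bar>(L * v j - \<xi> (v j)) - (L * u' j - \<xi> (u' j))\<bar> \<le> M * \<bar>v j - u' j\<bar>" for j
      using lipschitz_onD[OF lip, of "v j" "u' j"] by (simp add: dist_real_def)
  qed
  then show ?thesis
    unfolding relaxation_error_identity[OF gd \<open>\<Theta> \<in> lmeasurable\<close> eqv equ]
    by (simp add: L2norm_def IP)
qed

lemma relaxation_contraction:
  fixes \<Theta> :: "'a::euclidean_space set" and \<Theta>s :: "'b::finite \<Rightarrow> 'a set"
    and grad :: "('b \<Rightarrow> real) \<Rightarrow> 'a \<Rightarrow> 'a" and \<xi> :: "real \<Rightarrow> real"
    and R :: "('b \<Rightarrow> real) \<Rightarrow> real" and v u u' :: "'b \<Rightarrow> real"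
  assumes gd: "pc_grad_disc \<Theta> \<Theta>s grad" and "\<Theta> \<in> lmeasurable"
    and "0 < CD" and poinc: "\<And>w. L2norm \<Theta> (PiD \<Theta>s w) \<le> CD * L2normv \<Theta> (grad w)"
    and "0 < dt" and "0 < L"
    and lip: "M-lipschitz_on UNIV (\<lambda>p. L * p - \<xi> p)"
    and eqv: "\<And>\<phi>. L2inner \<Theta> (PiD \<Theta>s (\<lambda>j. \<xi> (v j))) (PiD \<Theta>s \<phi>)
                 + dt * L2innerv \<Theta> (grad v) (grad \<phi>) = R \<phi>"
    and equ: "\<And>\<phi>. L * L2inner \<Theta> (PiD \<Theta>s u) (PiD \<Theta>s \<phi>) + dt * L2innerv \<Theta> (grad u) (grad \<phi>)
        = L2inner \<Theta> (\<lambda>x. L * PiD \<Theta>s u' x - PiD \<Theta>s (\<lambda>j. \<xi> (u' j)) x) (PiD \<Theta>s \<phi>) + R \<phi>"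
  shows "normX \<Theta> \<Theta>s grad L dt CD (\<lambda>j. v j - u j)
    \<le> M / sqrt (L * (L + dt / CD\<^sup>2)) * normX \<Theta> \<Theta>s grad L dt CD (\<lambda>j. v j - u' j)"
proof -
  let ?a = "L2norm \<Theta> (PiD \<Theta>s (\<lambda>j. v j - u j))"
  let ?b = "L2normv \<Theta> (grad (\<lambda>j. v j - u j))"
  have "?a\<^sup>2 \<le> (CD * ?b)\<^sup>2"
    using poinc L2norm_nonneg by (rule power_mono)
  then have "dt / CD\<^sup>2 * ?a\<^sup>2 \<le> dt * ?b\<^sup>2"
    using \<open>0 < CD\<close> \<open>0 < dt\<close> by (simp add: field_simps power_mult_distrib)
  with relaxation_energy_estimate[OF gd \<open>\<Theta> \<in> lmeasurable\<close> lip eqv equ] show ?thesis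
    unfolding normX_def using assms lipschitz_on_nonneg[OF lip]
    by (intro contraction_from_energy_estimate) (auto simp: L2norm_nonneg)
qed

lemma contraction_factor_bounds:
  fixes L s M :: real
  assumes "0 \<le> M" and "M < L" and "0 \<le> s"
  shows "0 \<le> M / sqrt (L * (L + s))" and "M / sqrt (L * (L + s)) < 1"
proof -
  have "L \<le> sqrt (L * (L + s))"
    using assms by (intro real_le_rsqrt) (simp add: power2_eq_square)
  with assms show "0 \<le> M / sqrt (L * (L + s))" "M / sqrt (L * (L + s)) < 1"
    by (simp_all add: divide_less_eq_1_pos)
qed

lemma LIMSEQ_zero_if_contracting:
  fixes E :: "nat \<Rightarrow> real"
  assumes "\<And>i. 0 \<le> E i" and "0 \<le> \<alpha>" and "\<alpha> < 1" and "\<And>i. E (Suc i) \<le> \<alpha> * E i"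
  shows "E \<longlonglongrightarrow> 0"
proof (rule tendsto_sandwich[of "\<lambda>_. 0" _ _ "\<lambda>i. \<alpha> ^ i * E 0"])
  have "E i \<le> \<alpha> ^ i * E 0" for i
  proof (induction i)
    case (Suc i)
    have "E (Suc i) \<le> \<alpha> * E i" by fact
    also have "\<dots> \<le> \<alpha> * (\<alpha> ^ i * E 0)" using Suc.IH \<open>0 \<le> \<alpha>\<close> by (rule mult_left_mono)
    finally show ?case by simp
  qed simp
  then show "\<forall>\<^sub>F i in sequentially. E i \<le> \<alpha> ^ i * E 0" by simp
  show "(\<lambda>i. \<alpha> ^ i * E 0) \<longlonglongrightarrow> 0"
    using assms by (intro tendsto_mult_left_zero LIMSEQ_power_zero) simp
qed (use assms in simp_all)

theorem mainTheorem3: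
  fixes \<Theta> :: "'a::euclidean_space set"
    and \<Theta>s :: "'b::finite \<Rightarrow> 'a set"
    and grad :: "('b \<Rightarrow> real) \<Rightarrow> 'a \<Rightarrow> 'a"
    and CD dt \<epsilon> L\<zeta> L K :: real
    and \<zeta> :: "real \<Rightarrow> real" and rr :: "'a \<Rightarrow> real"
    and v :: "'b \<Rightarrow> real" and vi :: "nat \<Rightarrow> 'b \<Rightarrow> real"
  assumes "open \<Theta>" and "bounded \<Theta>"
    and gd: "pc_grad_disc \<Theta> \<Theta>s grad"
    and "CD > 0" and poinc: "\<And>w. L2norm \<Theta> (PiD \<Theta>s w) \<le> CD * L2normv \<Theta> (grad w)"
    and "dt > 0"
    and "\<epsilon> > 0" and "L\<zeta> > 0"
    and lip_\<zeta>: "K-lipschitz_on UNIV \<zeta>" and "\<zeta> 0 = 0"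
    and deriv_\<zeta>: "AE x in lborel. \<zeta> differentiable (at x) \<and> \<epsilon> \<le> deriv \<zeta> x \<and> deriv \<zeta> x \<le> L\<zeta>"
    and "L \<ge> 1 / \<epsilon>"
    and "rr \<in> borel_measurable (lebesgue_on \<Theta>)" and "integrable (lebesgue_on \<Theta>) (\<lambda>x. (rr x)\<^sup>2)"
    and eqv: "\<And>\<phi>. L2inner \<Theta> (PiD \<Theta>s (\<lambda>j. inv \<zeta> (v j))) (PiD \<Theta>s \<phi>)
                 + dt * L2innerv \<Theta> (grad v) (grad \<phi>) = L2inner \<Theta> rr (PiD \<Theta>s \<phi>)"
    and eqi: "\<And>i \<phi>. i \<ge> 1 \<Longrightarrow>
        L * L2inner \<Theta> (PiD \<Theta>s (vi i)) (PiD \<Theta>s \<phi>) + dt * L2innerv \<Theta> (grad (vi i)) (grad \<phi>)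
        = L2inner \<Theta> (\<lambda>x. L * PiD \<Theta>s (vi (i - 1)) x - PiD \<Theta>s (\<lambda>j. inv \<zeta> (vi (i - 1) j)) x) (PiD \<Theta>s \<phi>)
          + L2inner \<Theta> rr (PiD \<Theta>s \<phi>)"
  shows "(let \<alpha> = (L - 1 / L\<zeta>) / sqrt (L * (L + dt / CD\<^sup>2)) in
           \<alpha> < 1 \<and>
           (\<forall>i\<ge>1. normX \<Theta> \<Theta>s grad L dt CD (\<lambda>j. v j - vi i j)
                    \<le> \<alpha> * normX \<Theta> \<Theta>s grad L dt CD (\<lambda>j. v j - vi (i - 1) j)) \<and>
           ((\<lambda>i. normX \<Theta> \<Theta>s grad L dt CD (\<lambda>j. v j - vi i j)) \<longlonglongrightarrow> 0))"
proof -
  have "\<Theta> \<in> lmeasurable"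
    using \<open>bounded \<Theta>\<close> \<open>open \<Theta>\<close> by (simp add: bounded_set_imp_lmeasurable borel_open)
  have "AE x in lborel. \<zeta> differentiable (at x) \<and> \<epsilon> \<le> deriv \<zeta> x"
    and "AE x in lborel. \<zeta> differentiable (at x) \<and> deriv \<zeta> x \<le> L\<zeta>"
    using deriv_\<zeta> by (auto elim: eventually_mono)
  then have slope: "\<epsilon> * (y - x) \<le> \<zeta> y - \<zeta> x \<and> \<zeta> y - \<zeta> x \<le> L\<zeta> * (y - x)" if "x \<le> y" for x y
    using Lipschitz_AE_deriv_ge_imp_slope_ge[OF lip_\<zeta> _ that] Lipschitz_AE_deriv_le_imp_slope_le[OF lip_\<zeta> _ that]
    by blast
  have lip: "(L - 1 / L\<zeta>)-lipschitz_on UNIV (\<lambda>p. L * p - inv \<zeta> p)"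
    using Lipschitz_relaxed_inverse[OF \<open>\<epsilon> > 0\<close> \<open>L \<ge> 1 / \<epsilon>\<close> slope] .
  have "0 \<le> L - 1 / L\<zeta>" "L - 1 / L\<zeta> < L" "0 \<le> dt / CD\<^sup>2"
    using lipschitz_on_nonneg[OF lip] \<open>L\<zeta> > 0\<close> \<open>dt > 0\<close> by auto
  note \<alpha>_bounds = contraction_factor_bounds[OF this]
  have "0 < L" using \<open>0 \<le> L - 1 / L\<zeta>\<close> \<open>L - 1 / L\<zeta> < L\<close> by linarith
  define E where "E i = normX \<Theta> \<Theta>s grad L dt CD (\<lambda>j. v j - vi i j)" for i
  have step: "E i \<le> (L - 1 / L\<zeta>) / sqrt (L * (L + dt / CD\<^sup>2)) * E (i - 1)" if "i \<ge> 1" for i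
    unfolding E_def
    using relaxation_contraction[OF gd \<open>\<Theta> \<in> lmeasurable\<close> \<open>CD > 0\<close> poinc \<open>dt > 0\<close> \<open>0 < L\<close> lip eqv eqi[OF that]] .
  moreover have "E \<longlonglongrightarrow> 0"
    using step[of "Suc i" for i] \<alpha>_bounds \<open>0 < L\<close> \<open>dt > 0\<close>
    by (intro LIMSEQ_zero_if_contracting) (auto simp: E_def normX_nonneg)
  ultimately show ?thesis using \<alpha>_bounds unfolding Let_def E_def[abs_def] by blast
qed

end
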